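(* Let $R=4t\ge8$ with $t$ an integer, and $\mu=4$ (so $\gcd(R,4)=4$). Then under $G_{R,4}$ the ring $\mathbb Z_R$ has exactly three orbits: $O_0=\{\lambda:\lambda\equiv0\pmod4\}$, $O_1=\{\lambda:\lambda\equiv1\pmod2\}$ and $O_2=\{\lambda:\lambda\equiv2\pmod4\}$; $\mathrm P^+_{R,4}(\lambda)=\mathrm P^+_{R,4}(k)$ for all $\lambda\in O_k$, $k=0,1,2$; these values satisfy $$\mathrm P^+_{R,4}(0)+2\mathrm P^+_{R,4}(1)+\mathrm P^+_{R,4}(2)=\binom{R-1}{3},\quad \mathrm P^+_{R,4}(0)-\mathrm P^+_{R,4}(1)=\frac{R-4}{4},\quad \mathrm P^+_{R,4}(0)-\mathrm P^+_{R,4}(2)=-1,$$ and hence $\mathrm P^+_{R,4}(0)=\frac14\left(\binom{R-1}{3}+\frac{R-6}{2}\right)$, $\mathrm P^+_{R,4}(1)=\frac14\left(\binom{R-1}{3}-\frac{R-2}{2}\right)$, $\mathrm P^+_{R,4}(2)=\frac14\left(\binom{R-1}{3}+\frac{R+2}{2}\right)$.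
   Context: $\mathbb Z_R$ is the ring of integers modulo $R$ and $\mathbb Z_R^*$ its units; $\mathrm P^+_{R,\mu}(\lambda)$ is the number of $\mu$-element subsets of $\mathbb Z_R$ (distinct elements) whose sum in $\mathbb Z_R$ is $\lambda$. $G_{R,\mu}$ is the group of maps $\lambda\mapsto\lambda\ell+u\mu$ on $\mathbb Z_R$ with $\ell\in\mathbb Z_R^*$, $u\in\{0,\dots,R-1\}$; orbits are the equivalence classes of "$\lambda_2=\lambda_1\varphi$ for some $\varphi\in G_{R,\mu}$". *)

theory Defs
  imports Complex_Main
begin

text \<open>Z_R is represented by the residues {0..<R} (nat), arithmetic taken mod R.\<close>

definition P_plus :: "nat \<Rightarrow> nat \<Rightarrow> nat \<Rightarrow> nat" where
  "P_plus R \<mu> x = card {S. S \<subseteq> {0..<R} \<and> card S = \<mu> \<and> (\<Sum>S) mod R = x}"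

definition G_map :: "nat \<Rightarrow> nat \<Rightarrow> nat \<Rightarrow> nat \<Rightarrow> nat \<Rightarrow> nat" where
  "G_map R \<mu> l u x = (x * l + u * \<mu>) mod R"

definition G_group :: "nat \<Rightarrow> nat \<Rightarrow> (nat \<Rightarrow> nat) set" where
  "G_group R \<mu> = {G_map R \<mu> l u | l u. l < R \<and> coprime l R \<and> u < R}"

definition G_orbit :: "nat \<Rightarrow> nat \<Rightarrow> nat \<Rightarrow> nat set" where
  "G_orbit R \<mu> x = {\<phi> x | \<phi>. \<phi> \<in> G_group R \<mu>}"

definition G_orbits :: "nat \<Rightarrow> nat \<Rightarrow> nat set set" where
  "G_orbits R \<mu> = G_orbit R \<mu> ` {0..<R}"

end

(*
  For a unit l, the map s -> (s*l + u) mod R permutes Z_R and sends a mu-subset with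
  sum lambda to one with sum lambda*l + u*mu; hence P^+_{R,mu} is constant on the
  G_{R,mu}-orbits. When 4 divides R these orbits (for mu = 4) are the residue classes
  mod 4 up to sign, so P^+_{R,4} takes only the values p_j = P^+_{R,4}(j), j = 0, 1, 2
  (with p_3 = p_1). The character sum  sum_S w^(sum S)  over all 4-subsets equals
  (R/4) * (p_0 + p_1 w + p_2 w^2 + p_3 w^3) and is the X^4-coefficient of
  prod_{a<R} (1 + w^a X). For w = 1, -1, i the product is (1 + X)^R, (1 - X^2)^(R/2)
  and (1 - X^4)^(R/4), which gives three independent linear equations for p_0, p_1, p_2.
*)

theory Submission
  imports Defs "HOL-Computational_Algebra.Polynomial" "HOL-Number_Theory.Cong"
begin

lemma inj_on_affine_mod:
  fixes l R c :: nat
  assumes "coprime l R"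
  shows "inj_on (\<lambda>s. (s * l + c) mod R) {0..<R}"
proof (rule inj_onI)
  fix x y assume "x \<in> {0..<R}" "y \<in> {0..<R}" "(x * l + c) mod R = (y * l + c) mod R"
  then have "[x * l + c = y * l + c] (mod R)" and "x < R" "y < R"
    by (simp_all add: cong_def)
  then show "x = y"
    using assms by (simp add: cong_add_rcancel_nat cong_mult_rcancel_nat cong_less_imp_eq_nat)
qed

lemma bij_betw_affine_mod:
  fixes l R c :: nat
  assumes "coprime l R" "0 < R"
  shows "bij_betw (\<lambda>s. (s * l + c) mod R) {0..<R} {0..<R}"
proof -
  have "(\<lambda>s. (s * l + c) mod R) ` {0..<R} \<subseteq> {0..<R}"
    using assms(2) by auto
  then show ?thesis
    unfolding bij_betw_def using inj_on_affine_mod[OF assms(1)] by (simp add: endo_inj_surj)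
qed

lemma sum_image_affine_mod:
  fixes l R c :: nat
  assumes "coprime l R" "S \<subseteq> {0..<R}"
  shows "\<Sum>((\<lambda>s. (s * l + c) mod R) ` S) mod R = ((\<Sum>S mod R) * l + c * card S) mod R"
proof -
  have "inj_on (\<lambda>s. (s * l + c) mod R) S"
    using inj_on_affine_mod[OF assms(1)] assms(2) by (rule inj_on_subset)
  then have "\<Sum>((\<lambda>s. (s * l + c) mod R) ` S) mod R = (\<Sum>s\<in>S. (s * l + c) mod R) mod R"
    by (simp add: sum.reindex)
  also have "\<dots> = (\<Sum>s\<in>S. s * l + c) mod R"
    by (simp add: mod_sum_eq)
  also have "\<dots> = (\<Sum>S * l + c * card S) mod R"
    by (simp add: sum.distrib sum_distrib_right[symmetric] mult.commute)
  also have "\<dots> = ((\<Sum>S mod R) * l + c * card S) mod R"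
    by (metis mod_add_left_eq mod_mult_left_eq)
  finally show ?thesis .
qed

lemma bij_betw_image_card_subsets:
  assumes "bij_betw f A A"
  shows "bij_betw (image f) {S. S \<subseteq> A \<and> card S = k} {S. S \<subseteq> A \<and> card S = k}"
proof (rule bij_betw_subset[OF bij_betw_Pow[OF assms]])
  have card_image_f: "card (f ` S) = card S" if "S \<subseteq> A" for S
    using assms that by (meson bij_betw_imp_inj_on card_image inj_on_subset)
  show "image f ` {S. S \<subseteq> A \<and> card S = k} = {S. S \<subseteq> A \<and> card S = k}"
  proof (intro equalityI subsetI)
    fix T assume "T \<in> image f ` {S. S \<subseteq> A \<and> card S = k}"
    then obtain S where S: "S \<subseteq> A" "card S = k" and T: "T = f ` S"
      by blast
    have "f ` S \<subseteq> A"
      using S(1) bij_betw_imp_surj_on[OF assms] by blast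
    moreover have "card (f ` S) = k"
      using S card_image_f by simp
    ultimately show "T \<in> {S. S \<subseteq> A \<and> card S = k}"
      unfolding T by simp
  next
    fix T assume T: "T \<in> {S. S \<subseteq> A \<and> card S = k}"
    then have "T \<in> image f ` Pow A"
      using bij_betw_imp_surj_on[OF bij_betw_Pow[OF assms]] by simp
    then obtain S where "S \<subseteq> A" "T = f ` S"
      by blast
    then show "T \<in> image f ` {S. S \<subseteq> A \<and> card S = k}"
      using T card_image_f by auto
  qed
qed auto

lemma bij_betw_image_fibers:
  assumes bij: "bij_betw F X X" and equivariant: "\<And>S. S \<in> X \<Longrightarrow> \<sigma> (F S) = h (\<sigma> S)"
    and "inj_on h B" "\<sigma> ` X \<subseteq> B" "x \<in> B"
  shows "bij_betw F {S \<in> X. \<sigma> S = x} {S \<in> X. \<sigma> S = h x}"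
proof (rule bij_betw_subset[OF bij])
  show "F ` {S \<in> X. \<sigma> S = x} = {S \<in> X. \<sigma> S = h x}"
  proof (intro equalityI subsetI)
    fix T assume "T \<in> F ` {S \<in> X. \<sigma> S = x}"
    then obtain S where T: "T = F S" and S: "S \<in> X" "\<sigma> S = x"
      by (auto elim!: imageE)
    have "F S \<in> X"
      using bij_betwE[OF bij] S(1) by blast
    then show "T \<in> {S \<in> X. \<sigma> S = h x}"
      using equivariant[OF S(1)] S(2) T by simp
  next
    fix T assume T: "T \<in> {S \<in> X. \<sigma> S = h x}"
    then have "T \<in> F ` X"
      using bij_betw_imp_surj_on[OF bij] by simp
    then obtain S where S: "S \<in> X" "T = F S"
      by (rule imageE)
    have "h (\<sigma> S) = h x"
      using equivariant[OF S(1)] S(2) T by simp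
    then have "\<sigma> S = x"
      by (rule inj_onD[OF assms(3)]) (use S(1) assms(4,5) in auto)
    then show "T \<in> F ` {S \<in> X. \<sigma> S = x}"
      using S by blast
  qed
qed auto

lemma P_plus_G_map:
  assumes "coprime l R" "x < R"
  shows "P_plus R \<mu> (G_map R \<mu> l u x) = P_plus R \<mu> x"
proof -
  define f where "f s = (s * l + u) mod R" for s
  let ?F = "{S. S \<subseteq> {0..<R} \<and> card S = \<mu>}"
  have "bij_betw (image f) ?F ?F"
    unfolding f_def using assms by (intro bij_betw_image_card_subsets bij_betw_affine_mod) auto
  moreover have "\<Sum>(f ` S) mod R = G_map R \<mu> l u (\<Sum>S mod R)" if "S \<in> ?F" for S
    using that sum_image_affine_mod[OF assms(1)] unfolding f_def G_map_def by auto
  moreover have "inj_on (G_map R \<mu> l u) {0..<R}"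
    unfolding G_map_def[abs_def] using assms(1) by (rule inj_on_affine_mod)
  moreover have "(\<lambda>S. \<Sum>S mod R) ` ?F \<subseteq> {0..<R}" and "x \<in> {0..<R}"
    using assms(2) by (auto simp: image_subset_iff)
  ultimately have "bij_betw (image f) {S \<in> ?F. \<Sum>S mod R = x} {S \<in> ?F. \<Sum>S mod R = G_map R \<mu> l u x}"
    by (rule bij_betw_image_fibers)
  then show ?thesis
    unfolding P_plus_def by (simp add: conj_assoc bij_betw_same_card)
qed

lemma mem_G_orbit_iff:
  "y \<in> G_orbit R \<mu> x \<longleftrightarrow> (\<exists>l u. l < R \<and> coprime l R \<and> u < R \<and> y = G_map R \<mu> l u x)"
  unfolding G_orbit_def G_group_def by blast

lemma P_plus_G_orbit:
  assumes "y \<in> G_orbit R \<mu> x" "x < R"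
  shows "P_plus R \<mu> y = P_plus R \<mu> x"
  using assms P_plus_G_map by (auto simp: mem_G_orbit_iff)

lemma mem_G_orbit_iff_cong:
  assumes "\<mu> dvd R"
  shows "y \<in> G_orbit R \<mu> x \<longleftrightarrow> y < R \<and> (\<exists>l. coprime l R \<and> [y = x * l] (mod \<mu>))"
proof
  assume "y \<in> G_orbit R \<mu> x"
  then obtain l u where lu: "l < R" "coprime l R" "y = (x * l + u * \<mu>) mod R"
    by (auto simp: mem_G_orbit_iff G_map_def)
  then have "[y = x * l + u * \<mu>] (mod \<mu>)"
    using assms by (simp add: cong_def mod_mod_cancel)
  then have "[y = x * l] (mod \<mu>)"
    by (simp add: cong_def)
  then show "y < R \<and> (\<exists>l. coprime l R \<and> [y = x * l] (mod \<mu>))"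
    using lu by auto
next
  assume "y < R \<and> (\<exists>l. coprime l R \<and> [y = x * l] (mod \<mu>))"
  then obtain l where y: "y < R" and l: "coprime l R" "[y = x * l] (mod \<mu>)"
    by blast
  then have "0 < R"
    by simp
  define v where "v = x * (l mod R) mod R"
  have "[v = y] (mod \<mu>)"
  proof -
    have "[v = x * l] (mod R)"
      unfolding v_def by (simp add: cong_def mod_mult_right_eq)
    then show ?thesis
      using assms l(2) by (meson cong_dvd_modulus_nat cong_sym cong_trans)
  qed
  then have "[y + R = v] (mod \<mu>)"
    using assms by (auto simp: cong_def elim!: dvdE)
  moreover have "v \<le> y + R"
    using \<open>0 < R\<close> unfolding v_def by (simp add: less_imp_le_nat trans_le_add2)
  ultimately obtain k where k: "y + R - v = \<mu> * k"
    by (auto simp: cong_altdef_nat)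
  have "G_map R \<mu> (l mod R) (k mod R) x = (v + k * \<mu>) mod R"
    unfolding G_map_def v_def by (metis mod_add_eq mod_mod_trivial mod_mult_left_eq)
  also have "v + k * \<mu> = y + R"
    using k \<open>v \<le> y + R\<close> by (simp add: mult.commute)
  also have "(y + R) mod R = y"
    using y by simp
  finally show "y \<in> G_orbit R \<mu> x"
    using \<open>0 < R\<close> l(1) unfolding mem_G_orbit_iff by (metis coprime_mod_left_iff mod_less_divisor neq0_conv)
qed

lemma P_plus_mod:
  assumes "\<mu> dvd R" "x < R"
  shows "P_plus R \<mu> x = P_plus R \<mu> (x mod \<mu>)"
proof (rule P_plus_G_orbit)
  show "x \<in> G_orbit R \<mu> (x mod \<mu>)"
    using assms by (auto simp: mem_G_orbit_iff_cong intro!: exI[of _ 1])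
  show "x mod \<mu> < R"
    using assms(2) by (meson le_less_trans mod_less_eq_dividend)
qed

lemma G_orbit_4:
  assumes "4 dvd R"
  shows "G_orbit R 4 x = {y. y < R \<and> (y mod 4 = x mod 4 \<or> y mod 4 = 3 * x mod 4)}"
proof (intro set_eqI iffI)
  fix y assume "y \<in> G_orbit R 4 x"
  then obtain l where y: "y < R" and l: "coprime l R" "[y = x * l] (mod 4)"
    using assms by (auto simp: mem_G_orbit_iff_cong)
  have "odd l"
    using l(1) assms by (metis coprime_common_divisor dvd_trans even_numeral odd_one)
  then have "l mod 4 = 1 \<or> l mod 4 = 3"
    by presburger
  moreover have "y mod 4 = x * (l mod 4) mod 4"
    using l(2) by (simp add: cong_def mod_mult_right_eq)
  ultimately show "y \<in> {y. y < R \<and> (y mod 4 = x mod 4 \<or> y mod 4 = 3 * x mod 4)}"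
    using y by (auto simp: mult.commute)
next
  fix y assume "y \<in> {y. y < R \<and> (y mod 4 = x mod 4 \<or> y mod 4 = 3 * x mod 4)}"
  then have y: "y < R" and cases: "y mod 4 = x mod 4 \<or> y mod 4 = 3 * x mod 4"
    by auto
  obtain k where k: "R = 4 * k"
    using assms by blast
  with y have "R - 1 = 4 * (k - 1) + 3"
    by (cases k) simp_all
  then have "(R - 1) mod 4 = 3"
    by simp
  then have "x * (R - 1) mod 4 = x * 3 mod 4"
    by (metis mod_mult_right_eq)
  then have "[y = x * 1] (mod 4) \<or> [y = x * (R - 1)] (mod 4)"
    using cases by (auto simp: cong_def mult.commute)
  moreover have "coprime (R - 1) R"
    using coprime_Suc_right_nat[of "R - 1"] y by (simp add: Suc_pred)
  ultimately show "y \<in> G_orbit R 4 x"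
    unfolding mem_G_orbit_iff_cong[OF assms] using y coprime_1_left by blast
qed

lemma G_orbit_4_eq:
  assumes "4 dvd R"
  shows "x mod 4 = 0 \<Longrightarrow> G_orbit R 4 x = {y. y < R \<and> y mod 4 = 0}"
    and "odd x \<Longrightarrow> G_orbit R 4 x = {y. y < R \<and> y mod 2 = 1}"
    and "x mod 4 = 2 \<Longrightarrow> G_orbit R 4 x = {y. y < R \<and> y mod 4 = 2}"
proof -
  show "G_orbit R 4 x = {y. y < R \<and> y mod 4 = 0}" if "x mod 4 = 0"
  proof -
    from that have "3 * x mod 4 = 0"
      by presburger
    with that show ?thesis
      unfolding G_orbit_4[OF assms] by simp
  qed
  show "G_orbit R 4 x = {y. y < R \<and> y mod 2 = 1}" if "odd x"
  proof -
    from that have "x mod 4 = 1 \<and> 3 * x mod 4 = 3 \<or> x mod 4 = 3 \<and> 3 * x mod 4 = 1"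
      by presburger
    then have "(y mod 4 = x mod 4 \<or> y mod 4 = 3 * x mod 4) \<longleftrightarrow> y mod 4 = 1 \<or> y mod 4 = 3" for y
      by (elim disjE conjE) auto
    moreover have "y mod 2 = 1 \<longleftrightarrow> y mod 4 = 1 \<or> y mod 4 = 3" for y :: nat
      by presburger
    ultimately show ?thesis
      unfolding G_orbit_4[OF assms] by (simp only:)
  qed
  show "G_orbit R 4 x = {y. y < R \<and> y mod 4 = 2}" if "x mod 4 = 2"
  proof -
    from that have "3 * x mod 4 = 2"
      by presburger
    with that show ?thesis
      unfolding G_orbit_4[OF assms] by simp
  qed
qed

lemma G_orbits_4:
  assumes "4 dvd R" "0 < R"
  shows "G_orbits R 4 = {{x. x < R \<and> x mod 4 = 0}, {x. x < R \<and> x mod 2 = 1}, {x. x < R \<and> x mod 4 = 2}}"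
proof -
  let ?O = "{{x. x < R \<and> x mod 4 = 0}, {x. x < R \<and> x mod 2 = 1}, {x. x < R \<and> x mod 4 = 2}}"
  have "G_orbit R 4 x \<in> ?O" for x
  proof -
    have "x mod 4 = 0 \<or> odd x \<or> x mod 4 = 2"
      by presburger
    then show ?thesis
    proof (elim disjE)
      assume "x mod 4 = 0"
      then show ?thesis
        using G_orbit_4_eq(1)[OF assms(1)] by (simp only: insert_iff simp_thms)
    next
      assume "odd x"
      then show ?thesis
        using G_orbit_4_eq(2)[OF assms(1)] by (simp only: insert_iff simp_thms)
    next
      assume "x mod 4 = 2"
      then show ?thesis
        using G_orbit_4_eq(3)[OF assms(1)] by (simp only: insert_iff simp_thms)
    qed
  qed
  then have "G_orbit R 4 ` {0..<R} \<subseteq> ?O"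
    by (rule image_subsetI)
  moreover have "?O \<subseteq> G_orbit R 4 ` {0..<R}"
  proof -
    have "G_orbit R 4 0 = {x. x < R \<and> x mod 4 = 0}"
      by (rule G_orbit_4_eq(1)[OF assms(1)]) simp
    moreover have "G_orbit R 4 1 = {x. x < R \<and> x mod 2 = 1}"
      by (rule G_orbit_4_eq(2)[OF assms(1)]) simp
    moreover have "G_orbit R 4 2 = {x. x < R \<and> x mod 4 = 2}"
      by (rule G_orbit_4_eq(3)[OF assms(1)]) simp
    ultimately have "?O = G_orbit R 4 ` {0, 1, 2}"
      by (simp only: image_insert image_empty)
    moreover have "{0, 1, 2} \<subseteq> {0..<R}"
      using assms by (auto dest: dvd_imp_le)
    ultimately show ?thesis
      by (simp only: image_mono)
  qed
  ultimately show ?thesis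
    unfolding G_orbits_def by (rule subset_antisym)
qed

lemma prod_monom_1:
  fixes c :: "'a \<Rightarrow> 'b::comm_semiring_1"
  assumes "finite S"
  shows "(\<Prod>a\<in>S. monom (c a) 1) = monom (\<Prod>a\<in>S. c a) (card S)"
  using assms by (induction S rule: finite_induct) (simp_all add: mult_monom)

lemma coeff_prod_linear_factors:
  fixes c :: "'a \<Rightarrow> 'b::comm_semiring_1"
  assumes "finite A"
  shows "coeff (\<Prod>a\<in>A. [:1, c a:]) k = (\<Sum>S | S \<subseteq> A \<and> card S = k. \<Prod>a\<in>S. c a)"
proof -
  have "[:1, d:] = monom d 1 + 1" for d :: 'b
    by (simp add: monom_Suc monom_0 one_pCons)
  then have "(\<Prod>a\<in>A. [:1, c a:]) = (\<Prod>a\<in>A. monom (c a) 1 + 1)"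
    by simp
  also have "\<dots> = (\<Sum>S\<in>Pow A. (\<Prod>a\<in>S. monom (c a) 1) * (\<Prod>a\<in>A - S. 1))"
    by (rule prod_add[OF assms])
  also have "\<dots> = (\<Sum>S\<in>Pow A. monom (\<Prod>a\<in>S. c a) (card S))"
  proof (rule sum.cong[OF refl])
    fix S assume "S \<in> Pow A"
    then have "finite S"
      using assms by (auto intro: finite_subset)
    then show "(\<Prod>a\<in>S. monom (c a) 1) * (\<Prod>a\<in>A - S. 1) = monom (\<Prod>a\<in>S. c a) (card S)"
      using prod_monom_1[of S c] by simp
  qed
  finally have "coeff (\<Prod>a\<in>A. [:1, c a:]) k = (\<Sum>S\<in>Pow A. if card S = k then \<Prod>a\<in>S. c a else 0)"
    by (simp add: coeff_sum coeff_monom)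
  also have "\<dots> = (\<Sum>S\<in>{S \<in> Pow A. card S = k}. \<Prod>a\<in>S. c a)"
    by (rule sum.inter_filter[symmetric]) (use assms in simp)
  finally show ?thesis
    by simp
qed

context comm_monoid_set
begin

lemma periodic_nat:
  fixes n m :: nat
  assumes "\<And>k j. k < n \<Longrightarrow> j < m \<Longrightarrow> g (k * m + j) = g j"
  shows "F g {..<n * m} = F (\<lambda>_. F g {..<m}) {..<n}"
proof -
  have "F g {..<n * m} = F (\<lambda>k. F g {k * m..<k * m + m}) {..<n}"
    by (rule nat_group[symmetric])
  also have "\<dots> = F (\<lambda>_. F g {..<m}) {..<n}"
  proof (rule cong[OF refl])
    fix k assume k: "k \<in> {..<n}"
    have "F g {0 + k * m..<m + k * m} = F (\<lambda>j. g (j + k * m)) {0..<m}"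
      by (rule shift_bounds_nat_ivl)
    also have "\<dots> = F g {0..<m}"
      by (rule cong[OF refl]) (use assms k in \<open>simp add: add.commute\<close>)
    finally show "F g {k * m..<k * m + m} = F g {..<m}"
      by (simp add: atLeast0LessThan add.commute)
  qed
  finally show ?thesis .
qed

end

lemma sum_power_Sum_subsets_P_plus:
  fixes w :: "'a::comm_semiring_1"
  assumes "w ^ R = 1" "0 < R"
  shows "(\<Sum>S | S \<subseteq> {0..<R} \<and> card S = \<mu>. w ^ \<Sum>S) = (\<Sum>x<R. of_nat (P_plus R \<mu> x) * w ^ x)"
proof -
  let ?F = "{S. S \<subseteq> {0..<R} \<and> card S = \<mu>}"
  have power_mod: "w ^ n = w ^ (n mod R)" for n
  proof -
    have "w ^ n = w ^ (R * (n div R) + n mod R)"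
      by simp
    also have "\<dots> = w ^ (n mod R)"
      by (simp only: power_add power_mult assms(1) power_one mult_1)
    finally show ?thesis .
  qed
  have "finite ?F"
    by (rule finite_subset[of _ "Pow {0..<R}"]) auto
  moreover have "(\<lambda>S. \<Sum>S mod R) ` ?F \<subseteq> {..<R}"
    using assms(2) by auto
  ultimately have "(\<Sum>S\<in>?F. w ^ \<Sum>S) = (\<Sum>x<R. \<Sum>S | S \<in> ?F \<and> \<Sum>S mod R = x. w ^ \<Sum>S)"
    by (intro sum.group[symmetric]) auto
  also have "\<dots> = (\<Sum>x<R. of_nat (P_plus R \<mu> x) * w ^ x)"
  proof (rule sum.cong[OF refl])
    fix x
    have "(\<Sum>S | S \<in> ?F \<and> \<Sum>S mod R = x. w ^ \<Sum>S) = (\<Sum>S | S \<in> ?F \<and> \<Sum>S mod R = x. w ^ x)"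
    proof (rule sum.cong[OF refl])
      fix S assume "S \<in> {S. S \<in> ?F \<and> \<Sum>S mod R = x}"
      then show "w ^ \<Sum>S = w ^ x"
        using power_mod[of "\<Sum>S"] by simp
    qed
    then show "(\<Sum>S | S \<in> ?F \<and> \<Sum>S mod R = x. w ^ \<Sum>S) = of_nat (P_plus R \<mu> x) * w ^ x"
      by (simp add: P_plus_def conj_assoc)
  qed
  finally show ?thesis .
qed

lemma sum_power_Sum_subsets_eq_coeff:
  fixes w :: "'a::comm_semiring_1"
  shows "(\<Sum>S | S \<subseteq> {0..<R} \<and> card S = \<mu>. w ^ \<Sum>S) = coeff (\<Prod>a<R. [:1, w ^ a:]) \<mu>"
  by (simp add: coeff_prod_linear_factors power_sum atLeast0LessThan)

lemma sum_power_Sum_subsets_P_plus_periodic: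
  fixes w :: "'a::comm_semiring_1"
  assumes "R = t * \<mu>" "0 < R" "w ^ \<mu> = 1"
  shows "(\<Sum>S | S \<subseteq> {0..<R} \<and> card S = \<mu>. w ^ \<Sum>S)
    = of_nat t * (\<Sum>j<\<mu>. of_nat (P_plus R \<mu> j) * w ^ j)"
proof -
  have "w ^ R = 1"
    using assms by (simp add: power_mult mult.commute)
  have "of_nat (P_plus R \<mu> (k * \<mu> + j)) * w ^ (k * \<mu> + j) = of_nat (P_plus R \<mu> j) * w ^ j"
    if "k < t" "j < \<mu>" for k j
  proof -
    have "k * \<mu> + j < Suc k * \<mu>"
      using that by simp
    also have "\<dots> \<le> t * \<mu>"
      using that(1) by (intro mult_le_mono1) simp
    finally have "k * \<mu> + j < R"
      using assms(1) by simp
    then show ?thesis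
      using P_plus_mod[of \<mu> R "k * \<mu> + j"] assms that by (simp add: power_add power_mult mult.commute)
  qed
  then show ?thesis
    using sum_power_Sum_subsets_P_plus[OF \<open>w ^ R = 1\<close> assms(2)] assms(1) by (simp add: sum.periodic_nat)
qed

lemma coeff_one_plus_monom_power:
  fixes c :: "'a::comm_semiring_1"
  assumes "0 < n"
  shows "coeff ((1 + monom c n) ^ s) n = of_nat s * c"
proof (induction s)
  case 0
  then show ?case using assms by simp
next
  case (Suc s)
  have "coeff ((1 + monom c n) ^ s) 0 = 1"
    using assms by (simp add: coeff_0_power)
  then show ?case
    using Suc.IH by (simp add: distrib_right coeff_monom_mult algebra_simps)
qed

lemma coeff_one_plus_monom_power_double:
  fixes c :: "'a::comm_semiring_1"
  assumes "0 < n"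
  shows "coeff ((1 + monom c n) ^ s) (2 * n) = of_nat (s choose 2) * c ^ 2"
proof (induction s)
  case 0
  then show ?case using assms by (simp add: binomial_eq_0)
next
  case (Suc s)
  have "Suc s choose 2 = (s choose 2) + s"
    by (simp add: numeral_2_eq_2 choose_one)
  then show ?case
    using Suc.IH assms
    by (simp add: distrib_right coeff_monom_mult coeff_one_plus_monom_power power2_eq_square algebra_simps)
qed

lemma prod_linear_factors_periodic:
  fixes w :: "'a::comm_semiring_1"
  assumes "w ^ \<mu> = 1"
  shows "(\<Prod>a<t * \<mu>. [:1, w ^ a:]) = (\<Prod>j<\<mu>. [:1, w ^ j:]) ^ t"
proof -
  have "[:1, w ^ (k * \<mu> + j):] = [:1, w ^ j:]" for k j
    using assms by (simp add: power_add power_mult mult.commute[of k \<mu>])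
  then show ?thesis
    by (simp add: prod.periodic_nat)
qed

lemma P_plus_4_3_eq_1:
  assumes "4 dvd R" "0 < R"
  shows "P_plus R 4 3 = P_plus R 4 1"
proof (rule P_plus_G_orbit)
  have "4 \<le> R"
    using assms by (simp add: dvd_imp_le)
  then show "3 \<in> G_orbit R 4 1" "1 < R"
    using G_orbit_4_eq(2)[OF assms(1), of 1] by auto
qed

lemma sum_lessThan_4:
  fixes f :: "nat \<Rightarrow> 'a::comm_monoid_add"
  shows "(\<Sum>j<4. f j) = f 0 + f 1 + f 2 + f 3"
  by (simp add: eval_nat_numeral ac_simps)

lemma P_plus_4_sum_eq_choose:
  assumes "R = 4 * t" "0 < t"
  shows "P_plus R 4 0 + 2 * P_plus R 4 1 + P_plus R 4 2 = (R - 1) choose 3"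
proof -
  let ?p = "P_plus R 4"
  have p3: "P_plus R 4 3 = P_plus R 4 1"
    using assms by (intro P_plus_4_3_eq_1) auto
  have "R choose 4 = card {S. S \<subseteq> {0..<R} \<and> card S = 4}"
    by (simp add: n_subsets)
  also have "\<dots> = t * (\<Sum>j<4. ?p j)"
    using sum_power_Sum_subsets_P_plus_periodic[of R t 4 "1::nat"] assms by (simp add: mult.commute)
  also have "(\<Sum>j<4. ?p j) = ?p 0 + 2 * ?p 1 + ?p 2"
    unfolding sum_lessThan_4 p3 by simp
  finally have "4 * t * (?p 0 + 2 * ?p 1 + ?p 2) = 4 * (R choose 4)"
    by simp
  also have "\<dots> = R * ((R - 1) choose 3)"
    using Suc_times_binomial[of 3 "R - 1"] assms by (simp add: numeral_eq_Suc)
  finally show ?thesis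
    using assms by simp
qed

lemma P_plus_4_alternating_eq:
  assumes "R = 4 * t" "0 < t"
  shows "int (P_plus R 4 0) + int (P_plus R 4 2) = 2 * int (P_plus R 4 1) + 2 * int t - 1"
proof -
  let ?p = "\<lambda>j. int (P_plus R 4 j)"
  have p3: "P_plus R 4 3 = P_plus R 4 1"
    using assms by (intro P_plus_4_3_eq_1) auto
  have "(\<Prod>j<4. [:1, (-1::int) ^ j:]) = (1 + monom (-1) 2) ^ 2"
    by (simp add: eval_nat_numeral monom_Suc monom_0 one_pCons)
  then have "(\<Prod>a<R. [:1, (-1::int) ^ a:]) = (1 + monom (-1) 2) ^ (2 * t)"
    using prod_linear_factors_periodic[of "-1::int" 4 t] assms by (simp add: power_mult mult.commute[of t 4])
  then have "int t * (\<Sum>j<4. ?p j * (-1) ^ j) = int (2 * t choose 2)"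
    using sum_power_Sum_subsets_P_plus_periodic[of R t 4 "-1::int"] sum_power_Sum_subsets_eq_coeff[of "-1::int" R 4]
      coeff_one_plus_monom_power_double[of 2 "-1::int" "2 * t"] assms
    by (simp add: mult.commute)
  moreover have "(\<Sum>j<4. ?p j * (-1) ^ j) = ?p 0 + ?p 2 - 2 * ?p 1"
    unfolding sum_lessThan_4 p3 by simp
  moreover have "int (2 * t choose 2) = int t * (2 * int t - 1)"
    using assms by (simp add: choose_two)
  ultimately show ?thesis
    using assms by simp
qed

lemma P_plus_4_2_eq:
  assumes "R = 4 * t" "0 < t"
  shows "P_plus R 4 2 = P_plus R 4 0 + 1"
proof -
  let ?p = "\<lambda>j. of_nat (P_plus R 4 j) :: complex"
  have p3: "P_plus R 4 3 = P_plus R 4 1"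
    using assms by (intro P_plus_4_3_eq_1) auto
  have "\<i> ^ 4 = (1::complex)"
    by (simp add: power_mult[of _ 2 2, simplified])
  moreover have "(\<Prod>j<4. [:1, \<i> ^ j:]) = 1 + monom (-1::complex) 4"
    by (simp add: eval_nat_numeral monom_Suc monom_0 one_pCons)
  ultimately have "(\<Prod>a<R. [:1, \<i> ^ a:]) = (1 + monom (-1::complex) 4) ^ t"
    using prod_linear_factors_periodic[of \<i> 4 t] assms by (simp add: mult.commute[of t 4])
  then have "of_nat t * (\<Sum>j<4. ?p j * \<i> ^ j) = - of_nat t"
    using sum_power_Sum_subsets_P_plus_periodic[of R t 4 \<i>] sum_power_Sum_subsets_eq_coeff[of \<i> R 4]
      coeff_one_plus_monom_power[of 4 "-1::complex" t] assms \<open>\<i> ^ 4 = 1\<close>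
    by (simp add: mult.commute)
  moreover have "(\<Sum>j<4. ?p j * \<i> ^ j) = ?p 0 - ?p 2"
    unfolding sum_lessThan_4 p3 by (simp add: eval_nat_numeral)
  ultimately have "of_nat t * (?p 0 - ?p 2) = of_nat t * (-1)"
    by simp
  then have "?p 0 - ?p 2 = -1"
    using assms(2) by (metis mult_cancel_left of_nat_eq_0_iff neq0_conv)
  then have "complex_of_int (int (P_plus R 4 0) - int (P_plus R 4 2)) = complex_of_int (-1)"
    by simp
  then have "int (P_plus R 4 0) - int (P_plus R 4 2) = -1"
    by (simp only: of_int_eq_iff)
  then show ?thesis
    by linarith
qed

lemma P_plus_4_values:
  assumes "R = 4 * t" "0 < t"
  shows "real (P_plus R 4 0) - real (P_plus R 4 1) = (real R - 4) / 4"
    and "real (P_plus R 4 0) - real (P_plus R 4 2) = -1"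
    and "real (P_plus R 4 0) = 1/4 * (real ((R - 1) choose 3) + (real R - 6) / 2)"
    and "real (P_plus R 4 1) = 1/4 * (real ((R - 1) choose 3) - (real R - 2) / 2)"
    and "real (P_plus R 4 2) = 1/4 * (real ((R - 1) choose 3) + (real R + 2) / 2)"
  using arg_cong[OF P_plus_4_sum_eq_choose[OF assms], of real]
    arg_cong[OF P_plus_4_alternating_eq[OF assms], of real_of_int] P_plus_4_2_eq[OF assms] assms(1)
  by (simp_all add: field_simps)

theorem theorem4p13:
  fixes R t :: nat
  assumes "R = 4 * t" and "R \<ge> 8"
  defines "O0 \<equiv> {x. x < R \<and> x mod 4 = 0}"
      and "O1 \<equiv> {x. x < R \<and> x mod 2 = 1}"
      and "O2 \<equiv> {x. x < R \<and> x mod 4 = 2}"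
  shows "(G_orbits R 4 = {O0, O1, O2})
    \<and> (\<forall>x\<in>O0. P_plus R 4 x = P_plus R 4 0)
    \<and> (\<forall>x\<in>O1. P_plus R 4 x = P_plus R 4 1)
    \<and> (\<forall>x\<in>O2. P_plus R 4 x = P_plus R 4 2)
    \<and> (P_plus R 4 0 + 2 * P_plus R 4 1 + P_plus R 4 2 = (R - 1) choose 3)
    \<and> (real (P_plus R 4 0) - real (P_plus R 4 1) = (real R - 4) / 4)
    \<and> (real (P_plus R 4 0) - real (P_plus R 4 2) = -1)
    \<and> (real (P_plus R 4 0) = 1/4 * (real ((R - 1) choose 3) + (real R - 6) / 2))
    \<and> (real (P_plus R 4 1) = 1/4 * (real ((R - 1) choose 3) - (real R - 2) / 2))
    \<and> (real (P_plus R 4 2) = 1/4 * (real ((R - 1) choose 3) + (real R + 2) / 2))"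
proof -
  have t: "0 < t" and R: "4 dvd R"
    using assms(1,2) by auto
  have R_gt: "0 < R" "1 < R" "2 < R"
    using assms(2) by simp_all
  have orbits: "G_orbits R 4 = {O0, O1, O2}"
    unfolding O0_def O1_def O2_def using G_orbits_4[OF R R_gt(1)] .
  have "O0 = G_orbit R 4 0" "O1 = G_orbit R 4 1" "O2 = G_orbit R 4 2"
    unfolding O0_def O1_def O2_def using G_orbit_4_eq[OF R] by simp_all
  with R_gt have classes: "\<forall>x\<in>O0. P_plus R 4 x = P_plus R 4 0" "\<forall>x\<in>O1. P_plus R 4 x = P_plus R 4 1"
    "\<forall>x\<in>O2. P_plus R 4 x = P_plus R 4 2"
    by (blast intro: P_plus_G_orbit)+
  show ?thesis
    using orbits classes P_plus_4_sum_eq_choose[OF assms(1) t] P_plus_4_values[OF assms(1) t]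
    by (intro conjI) assumption+
qed

end
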